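(* In the Call-by-Value probabilistic $\lambda$-calculus (as defined in the context), for every multi-distribution $\mathbf m$ and every subdistribution $\mathbf r$: if $\mathbf m\Rightarrow^{\mathrm{obs}_{\mathrm{Nnf}}}\mathbf r$ then $\mathbf m\Rightarrow_E^{\mathrm{obs}_{\mathrm{Nnf}}}\mathbf r$.
   Context: Terms $\Lambda_\oplus$: $M::=x\mid\lambda x.M\mid MM\mid M\oplus M$; values $V::=x\mid\lambda x.M$. Contexts $C::=[\,]\mid MC\mid CM\mid\lambda x.C\mid C\oplus M\mid M\oplus C$; weak contexts $W::=[\,]\mid WM\mid MW$. A multi-distribution is a finite multiset $[p_iM_i]_{i\in I}$ with $p_i\in(0,1]$, $\sum_ip_i\le1$; $+$ is multiset union, $q\cdot[p_iM_i]_i=[(qp_i)M_i]_i$, $[M]:=[1M]$. $C[(\lambda x.M)V]\to_{\beta_v}[C[M\{V/x\}]]$; $W[M\oplus N]\to_\oplus[\tfrac12W[M],\tfrac12W[N]]$; $\to:=\to_{\beta_v}\cup\to_\oplus$; surface reduction $\to_s$ is $\to_\oplus$ together with the closure of $\beta_v$ under weak contexts. $M$ is $\to$-normal (surface-normal) if no $\mathbf m$ with $M\to\mathbf m$ ($M\to_s\mathbf m$); $\mathrm{Nnf}$ is the set of $\to$-normal terms. The lifting $\Rightarrow_r$ of a relation $r$ is the least relation with $[M]\Rightarrow_r[M]$; $[M]\Rightarrow_r\mathbf m$ if $M\,r\,\mathbf m$; $[p_iM_i]_{i\in I}\Rightarrow_r\sum_ip_i\cdot\mathbf m_i$ if $[M_i]\Rightarrow_r\mathbf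 m_i$ for all $i$. $\Rightarrow$ is the lifting of $\to$. Let $\rightsquigarrow_U$ be the unbiased iteration of weak $\beta_v$-reduction on $\Lambda_\oplus$: if $M\to_wM'$ (closure of $\beta_v$ under weak contexts) then $M\rightsquigarrow_UM'$; if $M$ is $\to_w$-normal: $\lambda x.P\rightsquigarrow_U\lambda x.P'$, $PQ\rightsquigarrow_UP'Q$, $PQ\rightsquigarrow_UPQ'$, $P\oplus Q\rightsquigarrow_UP'\oplus Q$, $P\oplus Q\rightsquigarrow_UP\oplus Q'$ whenever $P\rightsquigarrow_UP'$, resp. $Q\rightsquigarrow_UQ'$. $\rightsquigarrow_E$: if $M$ is not surface-normal and $M\to_s\mathbf m$ then $M\rightsquigarrow_E\mathbf m$; if $M$ is surface-normal and $M\rightsquigarrow_UM'$ then $M\rightsquigarrow_E[M']$; $\Rightarrow_E$ is its lifting. $\mathrm{obs}_{\mathrm{Nnf}}([p_iM_i]_{i\in I})$ is the subdistribution $\mu$ on $\mathrm{Nnf}$ with $\mu(N)=\sum_{i:\,M_i=N}p_i$; subdistributions are ordered pointwise (an $\omega$-cpo with least element the zero subdistribution). For a relation $R$ on multi-distributions, $\mathbf m\,R^{\mathrm{obs}_{\mathrm{Nnf}}}\,\mathbf r$ means there is a maximal $R$-sequence $(\mathbf m_n)_n$ from $\mathbf m$ (infinite, or finite ending in an $R$-normal element and then continued constantly) with $\sup_n\mathrm{obs}_{\mathrm{Nnf}}(\mathbf m_n)=\mathbf r$. *)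

theory Defs
  imports Complex_Main "HOL-Library.Multiset"
begin

datatype tm = Var nat | Lam tm | App tm tm | Choice tm tm  (* Choice M N = M \<oplus> N *)

fun is_value :: "tm \<Rightarrow> bool" where
  "is_value (Var _) = True"
| "is_value (Lam _) = True"
| "is_value _ = False"

fun shift :: "nat \<Rightarrow> tm \<Rightarrow> tm" where
  "shift k (Var i) = (if i < k then Var i else Var (Suc i))"
| "shift k (Lam M) = Lam (shift (Suc k) M)"
| "shift k (App M N) = App (shift k M) (shift k N)"
| "shift k (Choice M N) = Choice (shift k M) (shift k N)"

(* subst M k V = M{V/k} (capture-avoiding, indices above k decremented) *)
fun subst :: "tm \<Rightarrow> nat \<Rightarrow> tm \<Rightarrow> tm" where
  "subst (Var i) k V = (if i < k then Var i else if i = k then V else Var (i - 1))"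
| "subst (Lam M) k V = Lam (subst M (Suc k) (shift 0 V))"
| "subst (App M N) k V = App (subst M k V) (subst N k V)"
| "subst (Choice M N) k V = Choice (subst M k V) (subst N k V)"

type_synonym mdist = "(real \<times> tm) multiset"

definition is_mdist :: "mdist \<Rightarrow> bool" where
  "is_mdist m \<longleftrightarrow> (\<forall>x\<in>#m. 0 < fst x \<and> fst x \<le> 1) \<and> sum_mset (image_mset fst m) \<le> 1"

definition single :: "tm \<Rightarrow> mdist" where
  "single M = {#(1, M)#}"

definition scale :: "real \<Rightarrow> mdist \<Rightarrow> mdist" where
  "scale q m = image_mset (\<lambda>(p, M). (q * p, M)) m"

inductive beta :: "tm \<Rightarrow> tm \<Rightarrow> bool" where
  base: "is_value V \<Longrightarrow> beta (App (Lam M) V) (subst M 0 V)"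
| appL: "beta M M' \<Longrightarrow> beta (App M N) (App M' N)"
| appR: "beta N N' \<Longrightarrow> beta (App M N) (App M N')"
| lam: "beta M M' \<Longrightarrow> beta (Lam M) (Lam M')"
| chL: "beta M M' \<Longrightarrow> beta (Choice M N) (Choice M' N)"
| chR: "beta N N' \<Longrightarrow> beta (Choice M N) (Choice M N')"

inductive wbeta :: "tm \<Rightarrow> tm \<Rightarrow> bool" where
  base: "is_value V \<Longrightarrow> wbeta (App (Lam M) V) (subst M 0 V)"
| appL: "wbeta M M' \<Longrightarrow> wbeta (App M N) (App M' N)"
| appR: "wbeta N N' \<Longrightarrow> wbeta (App M N) (App M N')"

(* oplus_ctx T A B : T = W[M \<oplus> N], A = W[M], B = W[N] for a weak context W *)
inductive oplus_ctx :: "tm \<Rightarrow> tm \<Rightarrow> tm \<Rightarrow> bool" where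
  base: "oplus_ctx (Choice M N) M N"
| appL: "oplus_ctx M A B \<Longrightarrow> oplus_ctx (App M Q) (App A Q) (App B Q)"
| appR: "oplus_ctx M A B \<Longrightarrow> oplus_ctx (App Q M) (App Q A) (App Q B)"

definition oplus_step :: "tm \<Rightarrow> mdist \<Rightarrow> bool" where
  "oplus_step M m \<longleftrightarrow> (\<exists>A B. oplus_ctx M A B \<and> m = {#(1/2, A), (1/2, B)#})"

definition step :: "tm \<Rightarrow> mdist \<Rightarrow> bool" where
  "step M m \<longleftrightarrow> (\<exists>M'. beta M M' \<and> m = single M') \<or> oplus_step M m"

definition sstep :: "tm \<Rightarrow> mdist \<Rightarrow> bool" where
  "sstep M m \<longleftrightarrow> (\<exists>M'. wbeta M M' \<and> m = single M') \<or> oplus_step M m"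

definition normal :: "tm \<Rightarrow> bool" where
  "normal M \<longleftrightarrow> \<not> (\<exists>m. step M m)"

definition surface_normal :: "tm \<Rightarrow> bool" where
  "surface_normal M \<longleftrightarrow> \<not> (\<exists>m. sstep M m)"

definition wnormal :: "tm \<Rightarrow> bool" where
  "wnormal M \<longleftrightarrow> \<not> (\<exists>M'. wbeta M M')"

inductive U :: "tm \<Rightarrow> tm \<Rightarrow> bool" where
  weak: "wbeta M M' \<Longrightarrow> U M M'"
| lam: "wnormal (Lam P) \<Longrightarrow> U P P' \<Longrightarrow> U (Lam P) (Lam P')"
| appL: "wnormal (App P Q) \<Longrightarrow> U P P' \<Longrightarrow> U (App P Q) (App P' Q)"
| appR: "wnormal (App P Q) \<Longrightarrow> U Q Q' \<Longrightarrow> U (App P Q) (App P Q')"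
| chL: "wnormal (Choice P Q) \<Longrightarrow> U P P' \<Longrightarrow> U (Choice P Q) (Choice P' Q)"
| chR: "wnormal (Choice P Q) \<Longrightarrow> U Q Q' \<Longrightarrow> U (Choice P Q) (Choice P Q')"

definition E_step :: "tm \<Rightarrow> mdist \<Rightarrow> bool" where
  "E_step M m \<longleftrightarrow>
     (\<not> surface_normal M \<and> sstep M m) \<or>
     (surface_normal M \<and> (\<exists>M'. U M M' \<and> m = single M'))"

(* the family [p_i M_i]_{i\<in>I} is given as a list ps (finite index set); ms lists the m_i *)
inductive lift :: "(tm \<Rightarrow> mdist \<Rightarrow> bool) \<Rightarrow> mdist \<Rightarrow> mdist \<Rightarrow> bool" for r where
  refl: "lift r (single M) (single M)"
| one: "r M m \<Longrightarrow> lift r (single M) m"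
| sum: "list_all2 (\<lambda>x m. lift r (single (snd x)) m) ps ms \<Longrightarrow>
        lift r (mset ps) (sum_list (map2 (\<lambda>x m. scale (fst x) m) ps ms))"

(* subdistributions on terms, supported on Nnf *)
definition obs_Nnf :: "mdist \<Rightarrow> tm \<Rightarrow> real" where
  "obs_Nnf m N = (if normal N then sum_mset (image_mset fst (filter_mset (\<lambda>x. snd x = N) m)) else 0)"

definition max_seq :: "(mdist \<Rightarrow> mdist \<Rightarrow> bool) \<Rightarrow> mdist \<Rightarrow> (nat \<Rightarrow> mdist) \<Rightarrow> bool" where
  "max_seq R m ms \<longleftrightarrow> ms 0 = m \<and>
     (\<forall>n. R (ms n) (ms (Suc n)) \<or> ((\<nexists>x. R (ms n) x) \<and> ms (Suc n) = ms n))"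

definition obs_rel :: "(mdist \<Rightarrow> mdist \<Rightarrow> bool) \<Rightarrow> mdist \<Rightarrow> (tm \<Rightarrow> real) \<Rightarrow> bool" where
  "obs_rel R m r \<longleftrightarrow> (\<exists>ms. max_seq R m ms \<and> r = (\<lambda>N. SUP n. obs_Nnf (ms n) N))"

end

theory Submission
  imports Defs
begin

text \<open>A \<open>\<Rightarrow>\<close>-derivation from a single term is a tree whose inner nodes are \<open>\<beta>\<^sub>v\<close>-steps,
  anywhere in the term, and \<open>\<oplus>\<close>-steps in weak contexts. Every \<open>\<beta>\<^sub>v\<close>-reduction factors
  into weak steps followed by internal ones (Takahashi's parallel-reduction argument, with a
  weight on parallel steps to make the induction terminate), and internal steps neither create
  nor destroy a weak \<open>\<oplus>\<close>. So \<open>\<Rightarrow>\<^sub>E\<close> can replay such a tree surface steps first,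
  making the same choices, and reach each normal leaf with the unbiased strategy, which finds
  every \<open>\<beta>\<^sub>v\<close>-normal form of a surface-normal term. The replayed multi-distribution has the
  same observation as the original one and still reduces to it. Applying this along the given
  \<open>\<Rightarrow>\<close>-sequence and concatenating the finite \<open>\<Rightarrow>\<^sub>E\<close>-segments yields a \<open>\<Rightarrow>\<^sub>E\<close>-sequence
  whose observations are cofinal with the original ones, because observations only grow
  along \<open>\<Rightarrow>\<close>.\<close>

lemma subst_Var_eq [simp]: "subst (Var k) k u = u"
  by simp

lemma subst_Var_gt [simp]: "i < j \<Longrightarrow> subst (Var j) i u = Var (j - 1)"
  by simp

lemma subst_Var_lt [simp]: "j < i \<Longrightarrow> subst (Var j) i u = Var j"
  by simp

declare subst.simps(1) [simp del]

lemma shift_shift: "i < k + 1 \<Longrightarrow> shift (Suc k) (shift i t) = shift i (shift k t)"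
  by (induct t arbitrary: i k) auto

lemma shift_subst [simp]:
  "j < i + 1 \<Longrightarrow> shift i (subst t j s) = subst (shift (i + 1) t) j (shift i s)"
  by (induct t arbitrary: i j s)
    (auto simp: diff_Suc subst.simps(1) shift_shift split: nat.split)

lemma shift_subst_lt:
  "i < j + 1 \<Longrightarrow> shift i (subst t j s) = subst (shift i t) (j + 1) (shift i s)"
  by (induct t arbitrary: i j s) (auto simp: subst.simps(1) shift_shift)

lemma subst_shift [simp]: "subst (shift k t) k s = t"
  by (induct t arbitrary: k s) (simp_all add: subst.simps(1))

lemma subst_subst:
  "i < j + 1 \<Longrightarrow> subst (subst t (Suc j) (shift i v)) i (subst u j v) = subst (subst t i u) j v"
  by (induct t arbitrary: i j u v)
    (simp_all add: diff_Suc subst.simps(1) shift_shift [symmetric] shift_subst_lt split: nat.split)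

lemma is_value_shift [simp]: "is_value (shift k V) = is_value V"
  by (cases V) auto

lemma is_value_subst: "is_value W \<Longrightarrow> is_value V \<Longrightarrow> is_value (subst W k V)"
  by (cases W) (auto simp: subst.simps(1))

fun free_occs :: "nat \<Rightarrow> tm \<Rightarrow> nat" where
  "free_occs j (Var i) = (if i = j then 1 else 0)"
| "free_occs j (Lam M) = free_occs (Suc j) M"
| "free_occs j (App M N) = free_occs j M + free_occs j N"
| "free_occs j (Choice M N) = free_occs j M + free_occs j N"

lemma free_occs_shift:
  "free_occs j (shift c V) = (if j < c then free_occs j V else if j = c then 0 else free_occs (j - 1) V)"
  by (induct V arbitrary: j c) auto

lemma free_occs_subst:
  "free_occs j (subst A k V) =
     (if j < k then free_occs j A else free_occs (Suc j) A) + free_occs k A * free_occs j V"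
proof (induct A arbitrary: j k V)
  case (Var i)
  then show ?case by (auto simp: subst.simps(1))
next
  case (Lam B)
  then show ?case by (simp add: free_occs_shift)
qed (auto simp: algebra_simps)

section \<open>Weak factorization of \<open>\<beta>\<^sub>v\<close>-reduction\<close>

abbreviation bstar :: "tm \<Rightarrow> tm \<Rightarrow> bool" where "bstar \<equiv> beta\<^sup>*\<^sup>*"
abbreviation wstar :: "tm \<Rightarrow> tm \<Rightarrow> bool" where "wstar \<equiv> wbeta\<^sup>*\<^sup>*"

lemma rtranclp_map:
  assumes "\<And>x y. r x y \<Longrightarrow> s (f x) (f y)" and "r\<^sup>*\<^sup>* x y"
  shows "s\<^sup>*\<^sup>* (f x) (f y)"
  using assms(2) by induction (auto intro: rtranclp.rtrancl_into_rtrancl assms(1))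

lemma bstar_Lam: "bstar M M' \<Longrightarrow> bstar (Lam M) (Lam M')"
  by (rule rtranclp_map[where f = Lam]) (rule beta.lam)

lemma bstar_App: "bstar M M' \<Longrightarrow> bstar N N' \<Longrightarrow> bstar (App M N) (App M' N')"
  using rtranclp_map[of beta beta "\<lambda>M. App M N", OF beta.appL]
    rtranclp_map[of beta beta "App M'", OF beta.appR]
  by (rule rtranclp_trans)

lemma bstar_Choice: "bstar M M' \<Longrightarrow> bstar N N' \<Longrightarrow> bstar (Choice M N) (Choice M' N')"
  using rtranclp_map[of beta beta "\<lambda>M. Choice M N", OF beta.chL]
    rtranclp_map[of beta beta "Choice M'", OF beta.chR]
  by (rule rtranclp_trans)

lemma wstar_App: "wstar M M' \<Longrightarrow> wstar N N' \<Longrightarrow> wstar (App M N) (App M' N')"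
  using rtranclp_map[of wbeta wbeta "\<lambda>M. App M N", OF wbeta.appL]
    rtranclp_map[of wbeta wbeta "App M'", OF wbeta.appR]
  by (rule rtranclp_trans)

lemma wbeta_imp_beta: "wbeta M N \<Longrightarrow> beta M N"
  by (induct rule: wbeta.induct) (auto intro: beta.intros)

text \<open>Parallel reduction indexed by a weight: the number of contracted redexes, where a
  redex contracted inside the argument of a contracted redex counts once for every copy
  the substitution makes of it. The weight is what decreases in \<open>par_weak_split\<close>.\<close>

inductive par :: "nat \<Rightarrow> tm \<Rightarrow> tm \<Rightarrow> bool" where
  var: "par 0 (Var i) (Var i)"
| lam: "par n M M' \<Longrightarrow> par n (Lam M) (Lam M')"
| app: "par n M M' \<Longrightarrow> par m N N' \<Longrightarrow> par (n + m) (App M N) (App M' N')"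
| choice: "par n M M' \<Longrightarrow> par m N N' \<Longrightarrow> par (n + m) (Choice M N) (Choice M' N')"
| redex: "par n M M' \<Longrightarrow> par m V V' \<Longrightarrow> is_value V \<Longrightarrow>
          par (n + free_occs 0 M' * m + 1) (App (Lam M) V) (subst M' 0 V')"

text \<open>Internal parallel reduction contracts no redex in weak position, i.e.\ outside
  \<open>\<lambda>\<close>-abstractions and choices.\<close>

inductive ipar :: "tm \<Rightarrow> tm \<Rightarrow> bool" where
  var: "ipar (Var i) (Var i)"
| lam: "par n M M' \<Longrightarrow> ipar (Lam M) (Lam M')"
| app: "ipar M M' \<Longrightarrow> ipar N N' \<Longrightarrow> ipar (App M N) (App M' N')"
| choice: "par n M M' \<Longrightarrow> par m N N' \<Longrightarrow> ipar (Choice M N) (Choice M' N')"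

inductive ired :: "tm \<Rightarrow> tm \<Rightarrow> bool" where
  var: "ired (Var i) (Var i)"
| lam: "bstar M M' \<Longrightarrow> ired (Lam M) (Lam M')"
| app: "ired M M' \<Longrightarrow> ired N N' \<Longrightarrow> ired (App M N) (App M' N')"
| choice: "bstar M M' \<Longrightarrow> bstar N N' \<Longrightarrow> ired (Choice M N) (Choice M' N')"

lemma par_refl: "par 0 M M"
  by (induct M) (metis add_0 par.intros)+

lemma par_is_value: "par n V V' \<Longrightarrow> is_value V \<Longrightarrow> is_value V'"
  by (induct rule: par.induct) auto

lemma par_shift: "par n M M' \<Longrightarrow> par n (shift k M) (shift k M')"
proof (induct arbitrary: k rule: par.induct)
  case (redex n M M' m V V')
  have "par (n + free_occs 0 (shift (Suc k) M') * m + 1)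
          (App (Lam (shift (Suc k) M)) (shift k V)) (subst (shift (Suc k) M') 0 (shift k V'))"
    using redex by (intro par.redex) auto
  then show ?case by (simp add: free_occs_shift shift_subst_lt[of 0, simplified])
qed (auto intro: par.intros)

lemma par_subst:
  "par n M M' \<Longrightarrow> par m V V' \<Longrightarrow> is_value V \<Longrightarrow>
   \<exists>k \<le> n + free_occs j M' * m. par k (subst M j V) (subst M' j V')"
proof (induct arbitrary: j m V V' rule: par.induct)
  case (var i)
  then show ?case
    by (cases "i < j"; cases "i = j") (auto simp: subst.simps(1) intro: par.var)
next
  case (lam n M M')
  then obtain k where "k \<le> n + free_occs (Suc j) M' * m"
    "par k (subst M (Suc j) (shift 0 V)) (subst M' (Suc j) (shift 0 V'))"
    by (metis is_value_shift par_shift)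
  then show ?case by (auto intro: par.lam)
next
  case (app n M M' n2 N N')
  then obtain k1 k2 where "k1 \<le> n + free_occs j M' * m" "par k1 (subst M j V) (subst M' j V')"
    "k2 \<le> n2 + free_occs j N' * m" "par k2 (subst N j V) (subst N' j V')"
    by meson
  then show ?case
    by (intro exI[of _ "k1 + k2"]) (auto intro: par.app simp: algebra_simps)
next
  case (choice n M M' n2 N N')
  then obtain k1 k2 where "k1 \<le> n + free_occs j M' * m" "par k1 (subst M j V) (subst M' j V')"
    "k2 \<le> n2 + free_occs j N' * m" "par k2 (subst N j V) (subst N' j V')"
    by meson
  then show ?case
    by (intro exI[of _ "k1 + k2"]) (auto intro: par.choice simp: algebra_simps)
next
  case (redex n A A' m2 W W')
  obtain a where a: "a \<le> n + free_occs (Suc j) A' * m"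
    "par a (subst A (Suc j) (shift 0 V)) (subst A' (Suc j) (shift 0 V'))"
    using redex.hyps(2) redex.prems by (metis is_value_shift par_shift)
  obtain b where b: "b \<le> m2 + free_occs j W' * m" "par b (subst W j V) (subst W' j V')"
    using redex.hyps(4) redex.prems by blast
  have "par (a + free_occs 0 A' * b + 1)
      (App (Lam (subst A (Suc j) (shift 0 V))) (subst W j V)) (subst (subst A' 0 W') j V')"
    using par.redex[OF a(2) b(2)] redex is_value_subst subst_subst[of 0 j A' V' W']
    by (simp add: free_occs_subst free_occs_shift)
  moreover have "a + free_occs 0 A' * b + 1 \<le>
      n + free_occs 0 A' * m2 + 1 + free_occs j (subst A' 0 W') * m"
    using a(1) mult_le_mono2[OF b(1), of "free_occs 0 A'"]
    by (simp add: free_occs_subst algebra_simps)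
  ultimately show ?case by auto
qed

lemma beta_imp_par: "beta M N \<Longrightarrow> \<exists>n. par n M N"
proof (induct rule: beta.induct)
  case (base V M)
  show ?case using par.redex[OF par_refl par_refl base] by blast
qed (auto intro: par.intros par_refl)

lemma par_imp_bstar: "par n M N \<Longrightarrow> bstar M N"
proof (induct rule: par.induct)
  case (redex n M M' m V V')
  then have "bstar (App (Lam M) V) (App (Lam M') V')"
    by (intro bstar_App bstar_Lam)
  moreover have "beta (App (Lam M') V') (subst M' 0 V')"
    using redex par_is_value by (auto intro: beta.base)
  ultimately show ?case by (rule rtranclp.rtrancl_into_rtrancl)
qed (auto intro: bstar_Lam bstar_App bstar_Choice)

lemma ipar_imp_par: "ipar M N \<Longrightarrow> \<exists>n. par n M N"
  by (induct rule: ipar.induct) (auto intro: par.intros)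

lemma ipar_is_value_rev: "ipar V V' \<Longrightarrow> is_value V' \<Longrightarrow> is_value V"
  by (induct rule: ipar.induct) auto

lemma ipar_imp_ired: "ipar M N \<Longrightarrow> ired M N"
  by (induct rule: ipar.induct) (auto intro: ired.intros par_imp_bstar)

lemma ired_refl: "ired M M"
  by (induct M) (auto intro: ired.intros)

lemma ired_trans: "ired M N \<Longrightarrow> ired N L \<Longrightarrow> ired M L"
proof (induct arbitrary: L rule: ired.induct)
  case (lam M M')
  from lam.prems show ?case by cases (use lam.hyps in \<open>auto intro: ired.intros\<close>)
next
  case (app M M' N N')
  from app.prems show ?case by cases (use app.hyps in \<open>auto intro: ired.intros\<close>)
next
  case (choice M M' N N')
  from choice.prems show ?case by cases (use choice.hyps in \<open>auto intro: ired.intros\<close>)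
qed simp

lemma ired_imp_bstar: "ired M N \<Longrightarrow> bstar M N"
  by (induct rule: ired.induct) (auto intro: bstar_Lam bstar_App bstar_Choice)

lemma par_weak_split:
  assumes "par n M N"
  shows "\<exists>M'. wstar M M' \<and> ipar M' N"
  using assms
proof (induction n arbitrary: M N rule: less_induct)
  case (less n)
  have "par k M N \<Longrightarrow> k \<le> n \<Longrightarrow> \<exists>M'. wstar M M' \<and> ipar M' N" for k M N
  proof (induction rule: par.induct)
    case (app k1 M M' k2 N N')
    then show ?case by (auto intro: wstar_App ipar.app)
  next
    case (redex k1 A A' k2 V V')
    then obtain k where "k \<le> k1 + free_occs 0 A' * k2" "par k (subst A 0 V) (subst A' 0 V')"
      using par_subst by blast
    moreover have "k < n" using calculation(1) redex.prems by linarith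
    ultimately obtain M' where "wstar (subst A 0 V) M'" "ipar M' (subst A' 0 V')"
      using less.IH by blast
    moreover have "wbeta (App (Lam A) V) (subst A 0 V)"
      using redex by (auto intro: wbeta.base)
    ultimately show ?case by (auto intro: converse_rtranclp_into_rtranclp)
  qed (auto intro: ipar.intros)
  with less.prems show ?case by blast
qed

lemma ipar_wbeta_commute:
  "wbeta N L \<Longrightarrow> ipar M N \<Longrightarrow> \<exists>M'. wbeta M M' \<and> (\<exists>n. par n M' L)"
proof (induct arbitrary: M rule: wbeta.induct)
  case (base V N1)
  then obtain M1 M2 where M: "M = App M1 M2" "ipar M1 (Lam N1)" "ipar M2 V"
    by (auto elim: ipar.cases)
  from M(2) obtain A n where A: "M1 = Lam A" "par n A N1"
    by (auto elim: ipar.cases)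
  have "is_value M2" using M(3) base ipar_is_value_rev by blast
  moreover obtain m where "par m M2 V" using M(3) ipar_imp_par by blast
  ultimately obtain k where "par k (subst A 0 M2) (subst N1 0 V)"
    using par_subst[OF A(2)] by blast
  moreover have "wbeta M (subst A 0 M2)" using M A \<open>is_value M2\<close> by (auto intro: wbeta.base)
  ultimately show ?case by blast
next
  case (appL N1 N1' Q)
  then obtain M1 M2 where M: "M = App M1 M2" "ipar M1 N1" "ipar M2 Q"
    by (auto elim: ipar.cases)
  then obtain M1' n m where "wbeta M1 M1'" "par n M1' N1'" "par m M2 Q"
    using appL ipar_imp_par by blast
  then show ?case using M by (auto intro: wbeta.appL par.app)
next
  case (appR N1 N1' Q)
  then obtain M1 M2 where M: "M = App M2 M1" "ipar M1 N1" "ipar M2 Q"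
    by (auto elim: ipar.cases)
  then obtain M1' n m where "wbeta M1 M1'" "par n M1' N1'" "par m M2 Q"
    using appR ipar_imp_par by blast
  then show ?case using M by (auto intro: wbeta.appR par.app)
qed

lemma ipar_wstar_commute: "wstar N L \<Longrightarrow> ipar M N \<Longrightarrow> \<exists>M'. wstar M M' \<and> ipar M' L"
proof (induct arbitrary: M rule: rtranclp_induct)
  case (step L L')
  then obtain M1 M2 M3 n where "wstar M M1" "wbeta M1 M2" "par n M2 L'" "wstar M2 M3" "ipar M3 L'"
    by (meson ipar_wbeta_commute par_weak_split)
  then show ?case by (meson converse_rtranclp_into_rtranclp rtranclp_trans)
qed blast

theorem bstar_weak_factorization: "bstar X Y \<Longrightarrow> \<exists>X'. wstar X X' \<and> ired X' Y"
proof (induct rule: converse_rtranclp_induct)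
  case base
  then show ?case using ired_refl by blast
next
  case (step X X1)
  then obtain X1' n where X1': "wstar X1 X1'" "ired X1' Y" and "par n X X1"
    using beta_imp_par by blast
  then obtain X0 where X0: "wstar X X0" "ipar X0 X1"
    using par_weak_split by blast
  then obtain X0' where X0': "wstar X0 X0'" "ipar X0' X1'"
    using ipar_wstar_commute X1' by blast
  show ?case using X1' X0 X0' ipar_imp_ired ired_trans by (meson rtranclp_trans)
qed

section \<open>Surface normal forms and the unbiased strategy\<close>

lemma wnormal_simps [simp]:
  "wnormal (Var i)" "wnormal (Lam M)" "wnormal (Choice M N)"
  "wnormal (App A B) \<longleftrightarrow> wnormal A \<and> wnormal B \<and> \<not> (\<exists>M. A = Lam M \<and> is_value B)"
  unfolding wnormal_def by (auto elim: wbeta.cases intro: wbeta.intros)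

lemma surface_normal_iff: "surface_normal X \<longleftrightarrow> wnormal X \<and> (\<nexists>A B. oplus_ctx X A B)"
  unfolding surface_normal_def sstep_def oplus_step_def wnormal_def by blast

lemma normal_iff: "normal X \<longleftrightarrow> (\<nexists>Y. beta X Y) \<and> (\<nexists>A B. oplus_ctx X A B)"
  unfolding normal_def step_def oplus_step_def single_def by blast

lemma beta_normal_imp_wnormal: "\<nexists>Y. beta X Y \<Longrightarrow> wnormal X"
  unfolding wnormal_def using wbeta_imp_beta by blast

lemma ired_is_value: "ired X Y \<Longrightarrow> is_value X \<longleftrightarrow> is_value Y"
  by (induct rule: ired.induct) auto

lemma ired_wnormal: "ired X Y \<Longrightarrow> wnormal X \<longleftrightarrow> wnormal Y"
proof (induct rule: ired.induct)
  case (app M M' N N')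
  then have "(\<exists>A. M = Lam A) \<longleftrightarrow> (\<exists>A. M' = Lam A)"
    by (auto elim: ired.cases)
  then show ?case using app ired_is_value by auto
qed auto

lemma ired_oplus_ctx_rev:
  "oplus_ctx Y A' B' \<Longrightarrow> ired X Y \<Longrightarrow> \<exists>A B. oplus_ctx X A B \<and> bstar A A' \<and> bstar B B'"
proof (induct arbitrary: X rule: oplus_ctx.induct)
  case (base M N)
  then show ?case by (auto elim!: ired.cases intro: oplus_ctx.base)
next
  case (appL M A B Q)
  from appL.prems obtain X1 X2 where "X = App X1 X2" "ired X1 M" "ired X2 Q"
    by (auto elim: ired.cases)
  moreover obtain A0 B0 where "oplus_ctx X1 A0 B0" "bstar A0 A" "bstar B0 B"
    using appL.hyps(2) calculation by blast
  ultimately show ?case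
    by (intro exI[of _ "App A0 X2"] exI[of _ "App B0 X2"])
      (auto intro: oplus_ctx.appL bstar_App ired_imp_bstar)
next
  case (appR M A B Q)
  from appR.prems obtain X1 X2 where "X = App X1 X2" "ired X2 M" "ired X1 Q"
    by (auto elim: ired.cases)
  moreover obtain A0 B0 where "oplus_ctx X2 A0 B0" "bstar A0 A" "bstar B0 B"
    using appR.hyps(2) calculation by blast
  ultimately show ?case
    by (intro exI[of _ "App X1 A0"] exI[of _ "App X1 B0"])
      (auto intro: oplus_ctx.appR bstar_App ired_imp_bstar)
qed

lemma ired_oplus_ctx: "oplus_ctx X A B \<Longrightarrow> ired X Y \<Longrightarrow> \<exists>A' B'. oplus_ctx Y A' B'"
proof (induct arbitrary: Y rule: oplus_ctx.induct)
  case (base M N)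
  then show ?case by (auto elim!: ired.cases intro: oplus_ctx.base)
next
  case (appL M A B Q)
  from appL.prems obtain Y1 Y2 where "Y = App Y1 Y2" "ired M Y1"
    by (auto elim: ired.cases)
  then show ?case using appL.hyps(2)[of Y1] by (auto intro: oplus_ctx.appL)
next
  case (appR M A B Q)
  from appR.prems obtain Y1 Y2 where "Y = App Y1 Y2" "ired M Y2"
    by (auto elim: ired.cases)
  then show ?case using appR.hyps(2)[of Y2] by (auto intro: oplus_ctx.appR)
qed

lemma ired_normal_imp_surface_normal: "ired X Y \<Longrightarrow> normal Y \<Longrightarrow> surface_normal X"
  unfolding surface_normal_iff normal_iff
  using ired_wnormal beta_normal_imp_wnormal ired_oplus_ctx by blast

lemma U_imp_beta: "U X Y \<Longrightarrow> beta X Y"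
  by (induct rule: U.induct) (auto intro: beta.intros wbeta_imp_beta)

lemma U_wnormal_imp_ired: "U X Y \<Longrightarrow> wnormal X \<Longrightarrow> ired X Y \<and> wnormal Y"
proof (induct rule: U.induct)
  case (weak M M')
  then show ?case unfolding wnormal_def by blast
next
  case (appL P1 Q P')
  then have "ired P1 P'" "wnormal P'" by auto
  moreover have "(\<exists>A. P1 = Lam A) \<longleftrightarrow> (\<exists>A. P' = Lam A)"
    using calculation(1) by (auto elim: ired.cases)
  ultimately show ?case using appL ired_refl by (auto intro: ired.app)
next
  case (appR P1 Q Q')
  then have "ired Q Q'" "wnormal Q'" by auto
  moreover have "is_value Q \<longleftrightarrow> is_value Q'" using calculation(1) ired_is_value by blast
  ultimately show ?case using appR ired_refl by (auto intro: ired.app)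
qed (auto intro!: ired.intros dest: U_imp_beta)

lemma U_surface_normal: "U Z Z' \<Longrightarrow> surface_normal Z \<Longrightarrow> surface_normal Z'"
  unfolding surface_normal_iff using U_wnormal_imp_ired ired_oplus_ctx_rev by blast

abbreviation ustar :: "tm \<Rightarrow> tm \<Rightarrow> bool" where "ustar \<equiv> U\<^sup>*\<^sup>*"

lemma wstar_imp_ustar: "wstar X Y \<Longrightarrow> ustar X Y"
  using mono_rtranclp[of wbeta U] U.weak by blast

lemma ustar_Lam: "ustar M M' \<Longrightarrow> ustar (Lam M) (Lam M')"
  using rtranclp_map[of U U Lam, OF U.lam[OF wnormal_simps(2)]] .

lemma ustar_Choice: "ustar M M' \<Longrightarrow> ustar N N' \<Longrightarrow> ustar (Choice M N) (Choice M' N')"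
  using rtranclp_map[of U U "\<lambda>M. Choice M N", OF U.chL[OF wnormal_simps(3)]]
    rtranclp_map[of U U "Choice M'", OF U.chR[OF wnormal_simps(3)]]
  by (rule rtranclp_trans)

lemma ustar_AppL:
  "ustar M M' \<Longrightarrow> wnormal (App M N) \<Longrightarrow> ustar (App M N) (App M' N) \<and> wnormal (App M' N)"
proof (induct rule: rtranclp_induct)
  case (step M1 M2)
  then have "U (App M1 N) (App M2 N)" by (auto intro: U.appL)
  then show ?case using step U_wnormal_imp_ired by (meson rtranclp.rtrancl_into_rtrancl)
qed simp

lemma ustar_AppR:
  "ustar N N' \<Longrightarrow> wnormal (App M N) \<Longrightarrow> ustar (App M N) (App M N') \<and> wnormal (App M N')"
proof (induct rule: rtranclp_induct)
  case (step N1 N2)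
  then have "U (App M N1) (App M N2)" by (auto intro: U.appR)
  then show ?case using step U_wnormal_imp_ired by (meson rtranclp.rtrancl_into_rtrancl)
qed simp

lemma ustar_App:
  "ustar M M' \<Longrightarrow> ustar N N' \<Longrightarrow> wnormal (App M N) \<Longrightarrow> ustar (App M N) (App M' N')"
  by (meson rtranclp_trans ustar_AppL ustar_AppR)

theorem bstar_beta_normal_imp_ustar: "bstar X N \<Longrightarrow> \<nexists>Y. beta N Y \<Longrightarrow> ustar X N"
proof (induct N arbitrary: X)
  case (Var i)
  then obtain X' where "wstar X X'" "ired X' (Var i)"
    using bstar_weak_factorization by blast
  then show ?case by (auto elim: ired.cases dest: wstar_imp_ustar)
next
  case (Lam N1)
  then obtain X' M1 where "wstar X X'" "X' = Lam M1" "bstar M1 N1"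
    using bstar_weak_factorization by (blast elim: ired.cases)
  moreover have "\<nexists>Y. beta N1 Y" using Lam.prems beta.lam by blast
  ultimately show ?case using Lam.hyps by (meson rtranclp_trans ustar_Lam wstar_imp_ustar)
next
  case (App N1 N2)
  then obtain X' M1 M2 where X': "wstar X X'" "ired X' (App N1 N2)" "X' = App M1 M2"
    "ired M1 N1" "ired M2 N2"
    using bstar_weak_factorization by (blast elim: ired.cases)
  moreover have "wnormal X'" using X' ired_wnormal beta_normal_imp_wnormal App.prems by blast
  moreover have "\<nexists>Y. beta N1 Y" "\<nexists>Y. beta N2 Y" using App.prems beta.appL beta.appR by blast+
  ultimately show ?case using App.hyps
    by (meson ired_imp_bstar rtranclp_trans ustar_App wstar_imp_ustar)
next
  case (Choice N1 N2)
  then obtain X' M1 M2 where "wstar X X'" "X' = Choice M1 M2" "bstar M1 N1" "bstar M2 N2"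
    using bstar_weak_factorization by (blast elim: ired.cases)
  moreover have "\<nexists>Y. beta N1 Y" "\<nexists>Y. beta N2 Y" using Choice.prems beta.chL beta.chR by blast+
  ultimately show ?case using Choice.hyps
    by (meson rtranclp_trans ustar_Choice wstar_imp_ustar)
qed

lemma E_step_wbeta: "wbeta Z Z' \<Longrightarrow> E_step Z (single Z')"
  unfolding E_step_def surface_normal_def sstep_def by blast

lemma E_step_oplus: "oplus_ctx Z A B \<Longrightarrow> E_step Z {#(1/2, A), (1/2, B)#}"
  unfolding E_step_def surface_normal_def sstep_def oplus_step_def by blast

lemma E_step_U: "surface_normal Z \<Longrightarrow> U Z Z' \<Longrightarrow> E_step Z (single Z')"
  unfolding E_step_def by blast

lemma E_step_imp_step: "E_step M m \<Longrightarrow> step M m"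
  unfolding E_step_def step_def sstep_def using wbeta_imp_beta U_imp_beta by blast


section \<open>Lifting relations to multi-distributions\<close>

lemma scale_empty [simp]: "scale q {#} = {#}"
  by (simp add: scale_def)

lemma scale_add_mset [simp]: "scale q (add_mset (p, M) a) = add_mset (q * p, M) (scale q a)"
  by (simp add: scale_def)

lemma scale_plus [simp]: "scale q (a + b) = scale q a + scale q b"
  by (simp add: scale_def)

lemma scale_scale [simp]: "scale q (scale p a) = scale (q * p) a"
  by (induct a) (auto simp: scale_def)

lemma scale_one [simp]: "scale 1 a = a"
  by (induct a) (auto simp: scale_def)

lemma scale_single [simp]: "scale q (single M) = {#(q, M)#}"
  by (simp add: scale_def single_def)

definition mlift :: "(tm \<Rightarrow> mdist \<Rightarrow> bool) \<Rightarrow> mdist \<Rightarrow> mdist \<Rightarrow> bool" where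
  "mlift R a b \<longleftrightarrow> (\<exists>C. image_mset fst C = a \<and> (\<forall>y\<in>#C. R (snd (fst y)) (snd y)) \<and>
     b = (\<Sum>y\<in>#C. scale (fst (fst y)) (snd y)))"

lemma mlift_empty [simp]: "mlift R {#} b \<longleftrightarrow> b = {#}"
  unfolding mlift_def by auto

lemma mlift_add_mset:
  "mlift R (add_mset (p, M) a) c \<longleftrightarrow> (\<exists>m b. R M m \<and> mlift R a b \<and> c = scale p m + b)"
proof
  assume "mlift R (add_mset (p, M) a) c"
  then obtain C where C: "image_mset fst C = add_mset (p, M) a" "\<forall>y\<in>#C. R (snd (fst y)) (snd y)"
     "c = (\<Sum>y\<in>#C. scale (fst (fst y)) (snd y))"
    unfolding mlift_def by blast
  have "(p, M) \<in># image_mset fst C" using C(1) by simp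
  then obtain y where y: "y \<in># C" "fst y = (p, M)" by auto
  define C' where "C' = C - {#y#}"
  have C_eq: "C = add_mset y C'" using y C'_def by simp
  have "mlift R a (\<Sum>y\<in>#C'. scale (fst (fst y)) (snd y))"
    unfolding mlift_def using C C_eq y by (intro exI[of _ C']) auto
  then show "\<exists>m b. R M m \<and> mlift R a b \<and> c = scale p m + b"
    using C C_eq y by (intro exI[of _ "snd y"] exI[of _ "\<Sum>y\<in>#C'. scale (fst (fst y)) (snd y)"]) auto
next
  assume "\<exists>m b. R M m \<and> mlift R a b \<and> c = scale p m + b"
  then obtain m C where "R M m" "c = scale p m + (\<Sum>y\<in>#C. scale (fst (fst y)) (snd y))"
    "image_mset fst C = a" "\<forall>y\<in>#C. R (snd (fst y)) (snd y)"
    unfolding mlift_def by blast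
  then show "mlift R (add_mset (p, M) a) c"
    unfolding mlift_def by (intro exI[of _ "add_mset ((p, M), m) C"]) auto
qed

lemma mlift_single: "mlift R (single M) m \<longleftrightarrow> R M m"
  unfolding single_def by (auto simp: mlift_add_mset)

lemma mlift_plus: "mlift R a b \<Longrightarrow> mlift R a' b' \<Longrightarrow> mlift R (a + a') (b + b')"
proof (induct a arbitrary: b)
  case (add x a)
  then show ?case by (cases x) (auto simp: mlift_add_mset add.assoc)
qed simp

lemma mlift_split: "mlift R (a + a') c \<Longrightarrow> \<exists>b b'. c = b + b' \<and> mlift R a b \<and> mlift R a' b'"
proof (induct a arbitrary: c)
  case empty
  then show ?case by simp
next
  case (add x a)
  obtain p M where x: "x = (p, M)" by force
  with add.prems obtain m b0 where m: "R M m" "mlift R (a + a') b0" "c = scale p m + b0"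
    by (auto simp: mlift_add_mset)
  then obtain b b' where "b0 = b + b'" "mlift R a b" "mlift R a' b'"
    using add.hyps by blast
  with m show ?case using x
    by (intro exI[of _ "scale p m + b"] exI[of _ b']) (auto simp: mlift_add_mset add.assoc)
qed

lemma mlift_scale: "mlift R a b \<Longrightarrow> mlift R (scale q a) (scale q b)"
proof (induct a arbitrary: b)
  case (add x a)
  then show ?case by (cases x) (auto simp: mlift_add_mset)
qed simp

lemma mlift_unscale: "mlift R (scale q a) c \<Longrightarrow> \<exists>b. c = scale q b \<and> mlift R a b"
proof (induct a arbitrary: c)
  case empty
  then show ?case by simp
next
  case (add x a)
  obtain p M where x: "x = (p, M)" by force
  with add.prems obtain m b0 where m: "R M m" "mlift R (scale q a) b0" "c = scale (q * p) m + b0"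
    by (auto simp: mlift_add_mset)
  then obtain b where "b0 = scale q b" "mlift R a b"
    using add.hyps by blast
  with m show ?case using x
    by (intro exI[of _ "scale p m + b"]) (auto simp: mlift_add_mset)
qed

lemma mlift_refl: "(\<And>M. R M (single M)) \<Longrightarrow> mlift R a a"
proof (induct a)
  case (add x a)
  obtain p M where x: "x = (p, M)" by force
  have "mlift R (add_mset (p, M) a) (scale p (single M) + a)"
    using add by (subst mlift_add_mset) blast
  then show ?case using x by (simp add: single_def)
qed simp

lemma mlift_mono: "mlift R a b \<Longrightarrow> (\<And>M m. R M m \<Longrightarrow> R' M m) \<Longrightarrow> mlift R' a b"
  unfolding mlift_def by blast

lemma mlift_comp:
  "mlift R1 a b \<Longrightarrow> mlift R2 b c \<Longrightarrow> mlift (\<lambda>M m. \<exists>m1. R1 M m1 \<and> mlift R2 m1 m) a c"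
proof (induct a arbitrary: b c)
  case empty
  then show ?case by simp
next
  case (add x a)
  obtain p M where x: "x = (p, M)" by force
  with add.prems(1) obtain m b0 where m: "R1 M m" "mlift R1 a b0" "b = scale p m + b0"
    by (auto simp: mlift_add_mset)
  with add.prems(2) obtain c1 c2 where "c = scale p c1 + c2" "mlift R2 m c1" "mlift R2 b0 c2"
    by (metis mlift_split mlift_unscale)
  then show ?case using m add.hyps x by (auto simp: mlift_add_mset)
qed

definition refl_or :: "(tm \<Rightarrow> mdist \<Rightarrow> bool) \<Rightarrow> tm \<Rightarrow> mdist \<Rightarrow> bool" where
  "refl_or r M m \<longleftrightarrow> m = single M \<or> r M m"

lemma lift_imp_mlift: "lift r a b \<Longrightarrow> mlift (refl_or r) a b"
proof (induct rule: lift.induct)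
  case (sum ps ms)
  then show ?case
  proof (induct ps arbitrary: ms)
    case (Cons x ps)
    then obtain m ms' where "ms = m # ms'" "mlift (refl_or r) (single (snd x)) m"
      "mlift (refl_or r) (mset ps) (sum_list (map2 (\<lambda>x m. scale (fst x) m) ps ms'))"
      by (cases ms) auto
    then show ?case by (cases x) (auto simp: mlift_single mlift_add_mset)
  qed simp
qed (simp_all add: mlift_single refl_or_def)

lemma mlift_imp_lift: "mlift (refl_or r) a b \<Longrightarrow> lift r a b"
proof -
  assume "mlift (refl_or r) a b"
  then obtain C where C: "image_mset fst C = a" "\<forall>y\<in>#C. refl_or r (snd (fst y)) (snd y)"
    "b = (\<Sum>y\<in>#C. scale (fst (fst y)) (snd y))"
    unfolding mlift_def by blast
  obtain cs where cs: "mset cs = C" using ex_mset by blast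
  have "list_all2 (\<lambda>x m. lift r (single (snd x)) m) (map fst cs) (map snd cs)"
    unfolding list_all2_map1 list_all2_map2
  proof (rule list.rel_refl_strong)
    fix y
    assume "y \<in> set cs"
    then have "refl_or r (snd (fst y)) (snd y)" using C cs by auto
    then show "lift r (single (snd (fst y))) (snd y)"
      unfolding refl_or_def by (auto intro: lift.intros)
  qed
  then have "lift r (mset (map fst cs)) (sum_list (map2 (\<lambda>x m. scale (fst x) m) (map fst cs) (map snd cs)))"
    by (rule lift.sum)
  moreover have "sum_list (map2 (\<lambda>x m. scale (fst x) m) (map fst cs) (map snd cs)) = b"
    unfolding C(3) cs[symmetric] by (simp add: zip_map_fst_snd case_prod_unfold flip: sum_mset_sum_list)
  ultimately show ?thesis using C cs by simp
qed

lemma lift_eq_mlift: "lift r = mlift (refl_or r)"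
  using lift_imp_mlift mlift_imp_lift by blast

lemma lift_refl: "lift r a a"
  unfolding lift_eq_mlift by (rule mlift_refl) (simp add: refl_or_def)

lemma lift_mono: "lift r a b \<Longrightarrow> (\<And>M m. r M m \<Longrightarrow> r' M m) \<Longrightarrow> lift r' a b"
  unfolding lift_eq_mlift by (erule mlift_mono) (auto simp: refl_or_def)

lemma lift_rtranclp_plus:
  assumes "(lift r)\<^sup>*\<^sup>* a b" and "(lift r)\<^sup>*\<^sup>* a' b'"
  shows "(lift r)\<^sup>*\<^sup>* (a + a') (b + b')"
proof -
  have "(lift r)\<^sup>*\<^sup>* (a + a') (b + a')"
    using rtranclp_map[of "lift r" "lift r" "\<lambda>a. a + a'"] assms(1) lift_refl
    by (metis lift_eq_mlift mlift_plus)
  moreover have "(lift r)\<^sup>*\<^sup>* (b + a') (b + b')"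
    using rtranclp_map[of "lift r" "lift r" "\<lambda>a'. b + a'"] assms(2) lift_refl
    by (metis lift_eq_mlift mlift_plus)
  ultimately show ?thesis by simp
qed

lemma lift_rtranclp_scale: "(lift r)\<^sup>*\<^sup>* a b \<Longrightarrow> (lift r)\<^sup>*\<^sup>* (scale q a) (scale q b)"
  using rtranclp_map[of "lift r" "lift r" "scale q"] by (metis lift_eq_mlift mlift_scale)

lemma lift_rtranclp_mono:
  "(lift r)\<^sup>*\<^sup>* a b \<Longrightarrow> (\<And>M m. r M m \<Longrightarrow> r' M m) \<Longrightarrow> (lift r')\<^sup>*\<^sup>* a b"
  by (induct rule: rtranclp_induct) (auto intro: rtranclp.rtrancl_into_rtrancl lift_mono)


section \<open>Observation of normal forms\<close>

lemma obs_Nnf_empty [simp]: "obs_Nnf {#} N = 0"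
  by (simp add: obs_Nnf_def)

lemma obs_Nnf_add_mset [simp]:
  "obs_Nnf (add_mset (p, M) a) N = (if normal N \<and> M = N then p else 0) + obs_Nnf a N"
  by (simp add: obs_Nnf_def)

lemma obs_Nnf_plus [simp]: "obs_Nnf (a + b) N = obs_Nnf a N + obs_Nnf b N"
  by (simp add: obs_Nnf_def)

lemma obs_Nnf_scale [simp]: "obs_Nnf (scale q a) N = q * obs_Nnf a N"
proof (induct a)
  case (add x a)
  then show ?case by (cases x) (auto simp: algebra_simps)
qed simp

definition nonneg :: "mdist \<Rightarrow> bool" where
  "nonneg a \<longleftrightarrow> (\<forall>x\<in>#a. 0 \<le> fst x)"

lemma nonneg_simps [simp]:
  "nonneg {#}"
  "nonneg (add_mset (p, M) a) \<longleftrightarrow> 0 \<le> p \<and> nonneg a"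
  "nonneg (a + b) \<longleftrightarrow> nonneg a \<and> nonneg b"
  by (auto simp: nonneg_def)

lemma nonneg_scale: "0 \<le> q \<Longrightarrow> nonneg a \<Longrightarrow> nonneg (scale q a)"
  by (induct a) (auto simp: nonneg_def)

lemma obs_Nnf_nonneg: "nonneg a \<Longrightarrow> 0 \<le> obs_Nnf a N"
proof (induct a)
  case (add x a)
  then show ?case by (cases x) auto
qed simp

lemma step_nonneg: "step M m \<Longrightarrow> nonneg m"
  unfolding step_def oplus_step_def single_def by auto

lemma lift_step_nonneg: "lift step a b \<Longrightarrow> nonneg a \<Longrightarrow> nonneg b"
  unfolding lift_eq_mlift
proof (induct a arbitrary: b)
  case (add x a)
  obtain p M where x: "x = (p, M)" by force
  with add.prems obtain m b0 where m: "refl_or step M m" "mlift (refl_or step) a b0"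
    "b = scale p m + b0"
    by (auto simp: mlift_add_mset)
  have "nonneg b0" using add m x by simp
  moreover have "nonneg m" using m(1) step_nonneg by (auto simp: refl_or_def single_def)
  ultimately show ?case using add.prems x m(3) by (simp add: nonneg_scale)
qed simp

text \<open>Weight only moves away from terms that are not normal, so no observation decreases.\<close>

lemma lift_step_obs_Nnf_mono: "lift step a b \<Longrightarrow> nonneg a \<Longrightarrow> obs_Nnf a N \<le> obs_Nnf b N"
  unfolding lift_eq_mlift
proof (induct a arbitrary: b)
  case (add x a)
  obtain p M where x: "x = (p, M)" by force
  with add.prems obtain m b0 where m: "refl_or step M m" "mlift (refl_or step) a b0"
    "b = scale p m + b0"
    by (auto simp: mlift_add_mset)
  have IH: "obs_Nnf a N \<le> obs_Nnf b0 N" using add m x by auto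
  show ?case
  proof (cases "step M m")
    case True
    then have "\<not> normal M" unfolding normal_def by blast
    moreover have "0 \<le> p * obs_Nnf m N"
      using add.prems x True by (simp add: obs_Nnf_nonneg step_nonneg)
    ultimately show ?thesis using m IH x by auto
  next
    case False
    then show ?thesis using m IH x by (simp add: refl_or_def single_def)
  qed
qed simp

lemma lift_step_rtranclp_nonneg: "(lift step)\<^sup>*\<^sup>* a b \<Longrightarrow> nonneg a \<Longrightarrow> nonneg b"
  by (induct rule: rtranclp_induct) (auto intro: lift_step_nonneg)

lemma lift_step_rtranclp_obs_Nnf_mono:
  "(lift step)\<^sup>*\<^sup>* a b \<Longrightarrow> nonneg a \<Longrightarrow> obs_Nnf a N \<le> obs_Nnf b N"
proof (induct rule: rtranclp_induct)
  case (step b c)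
  then show ?case using lift_step_rtranclp_nonneg lift_step_obs_Nnf_mono by (meson order_trans)
qed simp

lemma reachable_obs_Nnf_mono:
  assumes "is_mdist m" and "(lift step)\<^sup>*\<^sup>* m a" and "(lift step)\<^sup>*\<^sup>* a b"
  shows "obs_Nnf a N \<le> obs_Nnf b N"
proof -
  have "nonneg m" using assms(1) unfolding is_mdist_def nonneg_def by auto
  then show ?thesis
    using assms(2,3) lift_step_rtranclp_nonneg lift_step_rtranclp_obs_Nnf_mono by blast
qed

section \<open>Simulating reduction trees by surface-first trees\<close>

inductive step_tree :: "tm \<Rightarrow> mdist \<Rightarrow> bool" where
  leaf: "step_tree X (single X)"
| beta: "beta X Y \<Longrightarrow> step_tree Y s \<Longrightarrow> step_tree X s"
| oplus: "oplus_ctx X A B \<Longrightarrow> step_tree A sA \<Longrightarrow> step_tree B sB \<Longrightarrow>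
          step_tree X (scale (1/2) sA + scale (1/2) sB)"

inductive E_tree :: "tm \<Rightarrow> mdist \<Rightarrow> bool" where
  leaf: "E_tree X (single X)"
| single: "E_step X (single Y) \<Longrightarrow> E_tree Y v \<Longrightarrow> E_tree X v"
| pair: "E_step X {#(1/2, A), (1/2, B)#} \<Longrightarrow> E_tree A va \<Longrightarrow> E_tree B vb \<Longrightarrow>
         E_tree X (scale (1/2) va + scale (1/2) vb)"

lemma step_tree_lift_step: "step_tree X s \<Longrightarrow> lift step s s' \<Longrightarrow> step_tree X s'"
  unfolding lift_eq_mlift
proof (induct arbitrary: s' rule: step_tree.induct)
  case (leaf X)
  then have "refl_or step X s'" by (simp add: mlift_single)
  then consider "s' = single X" | Y where "beta X Y" "s' = single Y"
    | A B where "oplus_ctx X A B" "s' = {#(1/2, A), (1/2, B)#}"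
    unfolding refl_or_def step_def oplus_step_def by blast
  then show ?case
  proof cases
    case 3
    then show ?thesis
      using step_tree.oplus[OF _ step_tree.leaf step_tree.leaf]
      by (simp add: single_def add_mset_commute)
  qed (auto intro: step_tree.intros)
next
  case (beta X Y s)
  then show ?case by (auto intro: step_tree.beta)
next
  case (oplus X A B sA sB)
  then obtain cA cB where "s' = scale (1/2) cA + scale (1/2) cB"
    "mlift (refl_or step) sA cA" "mlift (refl_or step) sB cB"
    by (metis mlift_split mlift_unscale)
  then show ?case using oplus by (auto intro: step_tree.oplus)
qed

lemma lift_step_rtranclp_imp_mlift_step_tree: "(lift step)\<^sup>*\<^sup>* m s \<Longrightarrow> mlift step_tree m s"
proof (induct rule: rtranclp_induct)
  case base
  then show ?case by (rule mlift_refl) (rule step_tree.leaf)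
next
  case (step s s')
  then have "mlift (\<lambda>M m. \<exists>m1. step_tree M m1 \<and> lift step m1 m) m s'"
    using mlift_comp[of step_tree m s "refl_or step" s'] unfolding lift_eq_mlift by blast
  then show ?case by (rule mlift_mono) (use step_tree_lift_step in blast)
qed

lemma E_tree_imp_lift_E_step_rtranclp: "E_tree X v \<Longrightarrow> (lift E_step)\<^sup>*\<^sup>* (single X) v"
proof (induct rule: E_tree.induct)
  case (single X Y v)
  then have "lift E_step (single X) (single Y)" by (auto intro: lift.one)
  then show ?case using single by (meson converse_rtranclp_into_rtranclp)
next
  case (pair X A B va vb)
  then have "lift E_step (single X) (scale (1/2) (single A) + scale (1/2) (single B))"
    using lift.one[of E_step X] by (simp add: single_def add_mset_commute)
  moreover have "(lift E_step)\<^sup>*\<^sup>* (scale (1/2) (single A) + scale (1/2) (single B))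
      (scale (1/2) va + scale (1/2) vb)"
    using pair by (intro lift_rtranclp_plus lift_rtranclp_scale)
  ultimately show ?case by (meson converse_rtranclp_into_rtranclp)
qed simp

lemma E_tree_wstar: "wstar X X' \<Longrightarrow> E_tree X' v \<Longrightarrow> E_tree X v"
  by (induct rule: converse_rtranclp_induct) (auto intro: E_tree.single E_step_wbeta)

lemma E_tree_ustar: "ustar X N \<Longrightarrow> surface_normal X \<Longrightarrow> E_tree N v \<Longrightarrow> E_tree X v"
  by (induct rule: converse_rtranclp_induct) (auto intro: E_tree.single E_step_U U_surface_normal)

definition obs_ancestor :: "real \<times> tm \<Rightarrow> real \<times> tm \<Rightarrow> bool" where
  "obs_ancestor x y \<longleftrightarrow>
     fst x = fst y \<and> bstar (snd x) (snd y) \<and> (normal (snd y) \<longrightarrow> snd x = snd y)"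

lemma rel_mset_fixed_induct [consumes 1, case_names empty add]:
  assumes "rel_mset R M N" and "P {#} {#}"
    and "\<And>a b M N. R a b \<Longrightarrow> rel_mset R M N \<Longrightarrow> P M N \<Longrightarrow> P (add_mset a M) (add_mset b N)"
  shows "P M N"
proof -
  have "rel_mset' R' M N \<Longrightarrow> R' = R \<Longrightarrow> P M N" for R'
    by (induct rule: rel_mset'.induct) (auto intro: assms(2,3) simp: rel_mset_rel_mset')
  then show ?thesis using assms(1) rel_mset_rel_mset' by blast
qed

lemma rel_mset_plus: "rel_mset R A B \<Longrightarrow> rel_mset R C D \<Longrightarrow> rel_mset R (A + C) (B + D)"
  by (induct rule: rel_mset_fixed_induct) (auto intro: rel_mset_Plus)

lemma rel_mset_obs_ancestor_scale:
  "rel_mset obs_ancestor a b \<Longrightarrow> rel_mset obs_ancestor (scale q a) (scale q b)"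
proof (induct rule: rel_mset_fixed_induct)
  case (add x y a b)
  then show ?case by (cases x; cases y) (auto intro!: rel_mset_Plus simp: obs_ancestor_def)
qed (simp add: rel_mset_Zero)

lemma rel_mset_obs_ancestor_single:
  "bstar V S \<Longrightarrow> (normal S \<longrightarrow> V = S) \<Longrightarrow> rel_mset obs_ancestor (single V) (single S)"
  unfolding single_def by (auto intro!: rel_mset_Plus rel_mset_Zero simp: obs_ancestor_def)

text \<open>The ancestor \<open>X\<close> first performs the surface steps, which by weak factorization and
  \<open>ired_oplus_ctx_rev\<close> can anticipate every weak \<open>\<beta>\<^sub>v\<close>-step and every choice of
  the tree; a normal leaf is then reached by the unbiased strategy.\<close>

theorem step_tree_E_simulation:
  "step_tree X1 s \<Longrightarrow> bstar X X1 \<Longrightarrow> \<exists>v. E_tree X v \<and> rel_mset obs_ancestor v s"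
proof (induct arbitrary: X rule: step_tree.induct)
  case (leaf X1)
  then obtain X' where X': "wstar X X'" "ired X' X1"
    using bstar_weak_factorization by blast
  show ?case
  proof (cases "normal X1")
    case True
    then have "ustar X' X1"
      using X' bstar_beta_normal_imp_ustar ired_imp_bstar normal_iff by blast
    moreover have "surface_normal X'" using X'(2) True ired_normal_imp_surface_normal by blast
    ultimately have "E_tree X (single X1)"
      using X'(1) E_tree.leaf E_tree_ustar E_tree_wstar by blast
    then show ?thesis using rel_mset_obs_ancestor_single by blast
  next
    case False
    then have "rel_mset obs_ancestor (single X') (single X1)"
      using X'(2) ired_imp_bstar rel_mset_obs_ancestor_single by blast
    moreover have "E_tree X (single X')" using X'(1) E_tree_wstar E_tree.leaf by blast
    ultimately show ?thesis by blast
  qed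
next
  case (beta X1 Y s)
  then show ?case by (meson rtranclp.rtrancl_into_rtrancl)
next
  case (oplus X1 A1 B1 sA sB)
  then obtain X' where X': "wstar X X'" "ired X' X1"
    using bstar_weak_factorization by blast
  then obtain A B where AB: "oplus_ctx X' A B" "bstar A A1" "bstar B B1"
    using ired_oplus_ctx_rev oplus.hyps(1) by blast
  with oplus.hyps obtain va vb where "E_tree A va" "rel_mset obs_ancestor va sA"
    "E_tree B vb" "rel_mset obs_ancestor vb sB"
    by blast
  then have "E_tree X (scale (1/2) va + scale (1/2) vb)"
    "rel_mset obs_ancestor (scale (1/2) va + scale (1/2) vb) (scale (1/2) sA + scale (1/2) sB)"
    using X'(1) AB(1) by (auto intro: E_tree.pair E_step_oplus E_tree_wstar
        rel_mset_plus rel_mset_obs_ancestor_scale)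
  then show ?case by blast
qed

lemma mlift_step_tree_E_simulation:
  "mlift step_tree m s \<Longrightarrow> \<exists>u. (lift E_step)\<^sup>*\<^sup>* m u \<and> rel_mset obs_ancestor u s"
proof (induct m arbitrary: s)
  case (add x a)
  obtain p X where x: "x = (p, X)" by force
  with add.prems obtain sX s0 where s: "step_tree X sX" "mlift step_tree a s0" "s = scale p sX + s0"
    by (auto simp: mlift_add_mset)
  then obtain v u0 where "E_tree X v" "rel_mset obs_ancestor v sX"
    "(lift E_step)\<^sup>*\<^sup>* a u0" "rel_mset obs_ancestor u0 s0"
    using step_tree_E_simulation add.hyps by blast
  then have "(lift E_step)\<^sup>*\<^sup>* (scale p (single X) + a) (scale p v + u0)"
    and "rel_mset obs_ancestor (scale p v + u0) s"
    unfolding s(3)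
    by (blast intro: lift_rtranclp_plus lift_rtranclp_scale E_tree_imp_lift_E_step_rtranclp,
        blast intro: rel_mset_plus rel_mset_obs_ancestor_scale)
  then show ?case using x by auto
qed simp

lemma rel_mset_obs_ancestor_imp_lift_step: "rel_mset obs_ancestor u s \<Longrightarrow> (lift step)\<^sup>*\<^sup>* u s"
proof (induct rule: rel_mset_fixed_induct)
  case (add x y a b)
  obtain p V S where xy: "x = (p, V)" "y = (p, S)" "bstar V S"
    using add.hyps(1) by (cases x; cases y) (auto simp: obs_ancestor_def)
  have "lift step {#(p, M)#} {#(p, M')#}" if "beta M M'" for M M'
    using lift.one[of step M "single M'"] lift.sum[of step "[(p, M)]" "[single M']"] that
    by (simp add: step_def single_def)
  then have "(lift step)\<^sup>*\<^sup>* {#(p, V)#} {#(p, S)#}"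
    using rtranclp_map[of beta "lift step" "\<lambda>M. {#(p, M)#}"] xy(3) by blast
  then show ?case using add.hyps(3) lift_rtranclp_plus[of step "{#x#}" "{#y#}" a b] xy by simp
qed simp

lemma rel_mset_obs_ancestor_obs_Nnf: "rel_mset obs_ancestor u s \<Longrightarrow> obs_Nnf u = obs_Nnf s"
proof (induct rule: rel_mset_fixed_induct)
  case (add x y a b)
  obtain p V S where xy: "x = (p, V)" "y = (p, S)" "bstar V S" "normal S \<longrightarrow> V = S"
    using add.hyps(1) by (cases x; cases y) (auto simp: obs_ancestor_def)
  moreover have "normal V \<Longrightarrow> V = S"
    using xy(3) by (cases rule: converse_rtranclpE) (auto simp: normal_iff)
  ultimately show ?case using add.hyps(3) by (auto simp: fun_eq_iff)
qed simp

theorem lift_step_rtranclp_E_simulation: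
  assumes "(lift step)\<^sup>*\<^sup>* m s"
  shows "\<exists>u. (lift E_step)\<^sup>*\<^sup>* m u \<and> (lift step)\<^sup>*\<^sup>* u s \<and> obs_Nnf u = obs_Nnf s"
  using mlift_step_tree_E_simulation[OF lift_step_rtranclp_imp_mlift_step_tree[OF assms]]
    rel_mset_obs_ancestor_imp_lift_step rel_mset_obs_ancestor_obs_Nnf
  by blast


section \<open>From finite chains to infinite sequences\<close>

lemma SUP_real_eq_if_cofinal:
  fixes f :: "'a \<Rightarrow> real" and g :: "'b \<Rightarrow> real"
  assumes "\<And>i. \<exists>j. f i \<le> g j" and "\<And>j. \<exists>i. g j \<le> f i"
  shows "(SUP i. f i) = (SUP j. g j)"
proof -
  have "(\<forall>x\<in>range f. x \<le> z) \<longleftrightarrow> (\<forall>x\<in>range g. x \<le> z)" for z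
    using assms by simp (meson order_trans)
  then show ?thesis unfolding Sup_real_def by simp
qed

text \<open>\<open>concat_index L i = (j, k)\<close>: the \<open>i\<close>-th element of the concatenation of
  segments of lengths \<open>L 0, L 1, \<dots>\<close> is the \<open>k\<close>-th element of segment \<open>j\<close>.\<close>

primrec concat_index :: "(nat \<Rightarrow> nat) \<Rightarrow> nat \<Rightarrow> nat \<times> nat" where
  "concat_index L 0 = (0, 0)"
| "concat_index L (Suc i) =
    (let (j, k) = concat_index L i in if Suc k < L j then (j, Suc k) else (Suc j, 0))"

lemma concat_index_less: "(\<And>j. 0 < L j) \<Longrightarrow> concat_index L i = (j, k) \<Longrightarrow> k < L j"
  by (induct i arbitrary: j k) (auto simp: Let_def split: prod.splits if_splits)

lemma concat_index_segment:
  "concat_index L i = (j, 0) \<Longrightarrow> k < L j \<Longrightarrow> concat_index L (i + k) = (j, k)"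
  by (induct k) auto

lemma concat_index_segment_start: "(\<And>j. 0 < L j) \<Longrightarrow> \<exists>i. concat_index L i = (j, 0)"
proof (induct j)
  case (Suc j)
  then obtain i k where "concat_index L i = (j, 0)" "L j = Suc k"
    by (metis gr0_implies_Suc)
  then have "concat_index L (Suc (i + k)) = (Suc j, 0)"
    using concat_index_segment[of L i j k] by simp
  then show ?case by blast
qed (metis concat_index.simps(1))

lemma reflp_rtranclp_imp_path:
  assumes "\<And>x. R x x" and "R\<^sup>*\<^sup>* x y"
  shows "\<exists>n f. f 0 = x \<and> f (Suc n) = y \<and> (\<forall>k \<le> n. R (f k) (f (Suc k)))"
proof -
  obtain n where "(R ^^ n) x y" using assms(2) rtranclp_imp_relpowp by metis
  then have "(R ^^ Suc n) x y" using assms(1) relpowp_Suc_I2 by metis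
  then show ?thesis unfolding relpowp_fun_conv by (metis less_Suc_eq_le)
qed

lemma reflp_rtranclp_chain_imp_seq:
  assumes refl: "\<And>x. R x x" and chain: "\<And>j. R\<^sup>*\<^sup>* (c j) (c (Suc j))"
  obtains T where "T 0 = c 0" and "\<And>i. R (T i) (T (Suc i))"
    and "\<And>j. \<exists>i. T i = c j" and "\<And>i. \<exists>j. R\<^sup>*\<^sup>* (T i) (c j)"
proof -
  have "\<forall>j. \<exists>n f. f 0 = c j \<and> f (Suc n) = c (Suc j) \<and> (\<forall>k \<le> n. R (f k) (f (Suc k)))"
    using reflp_rtranclp_imp_path[OF refl chain] by blast
  then obtain n f where f: "\<And>j. f j 0 = c j" "\<And>j. f j (Suc (n j)) = c (Suc j)"
    "\<And>j k. k \<le> n j \<Longrightarrow> R (f j k) (f j (Suc k))"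
    by metis
  define L where "L j = Suc (n j)" for j
  define T where "T i = (case concat_index L i of (j, k) \<Rightarrow> f j k)" for i
  have L_pos: "0 < L j" for j by (simp add: L_def)
  have T_index: "concat_index L i = (j, k) \<Longrightarrow> T i = f j k \<and> k \<le> n j" for i j k
    using concat_index_less[OF L_pos] by (fastforce simp: T_def L_def)
  have "R (T i) (T (Suc i))" for i
  proof -
    obtain j k where jk: "concat_index L i = (j, k)" by force
    have "T (Suc i) = f j (Suc k)"
    proof (cases "k < n j")
      case True
      then show ?thesis using jk by (simp add: T_def L_def)
    next
      case False
      then show ?thesis using jk T_index[OF jk] f(1,2) by (simp add: T_def L_def)
    qed
    then show ?thesis using T_index[OF jk] f(3) by simp
  qed
  moreover have "\<exists>i. T i = c j" for j
  proof -
    obtain i where "concat_index L i = (j, 0)"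
      using concat_index_segment_start[of L j] L_pos by blast
    then show ?thesis using T_index f(1) by metis
  qed
  moreover have "\<exists>j. R\<^sup>*\<^sup>* (T i) (c j)" for i
  proof -
    obtain j k where jk: "concat_index L i = (j, k)" by force
    then have "T i = f j k" "k \<le> n j" using T_index by auto
    moreover have "(R ^^ (Suc (n j) - k)) (f j k) (f j (Suc (n j)))"
      unfolding relpowp_fun_conv using calculation(2) f(3)
      by (intro exI[of _ "\<lambda>t. f j (k + t)"]) auto
    ultimately show ?thesis using f(2) relpowp_imp_rtranclp by metis
  qed
  ultimately show ?thesis using that f(1) T_index[of 0] by simp
qed

lemma lift_step_seq_E_tracking:
  assumes "\<And>n. lift step (ms n) (ms (Suc n))"
  obtains c where "c 0 = ms 0" and "\<And>j. (lift E_step)\<^sup>*\<^sup>* (c j) (c (Suc j))"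
    and "\<And>j. (lift step)\<^sup>*\<^sup>* (c j) (ms j)" and "\<And>j. obs_Nnf (c j) = obs_Nnf (ms j)"
proof -
  have "\<forall>u s. \<exists>v. (lift step)\<^sup>*\<^sup>* u s \<longrightarrow>
      (lift E_step)\<^sup>*\<^sup>* u v \<and> (lift step)\<^sup>*\<^sup>* v s \<and> obs_Nnf v = obs_Nnf s"
    using lift_step_rtranclp_E_simulation by blast
  then obtain f where f: "\<And>u s. (lift step)\<^sup>*\<^sup>* u s \<Longrightarrow>
      (lift E_step)\<^sup>*\<^sup>* u (f u s) \<and> (lift step)\<^sup>*\<^sup>* (f u s) s \<and> obs_Nnf (f u s) = obs_Nnf s"
    by metis
  define c where "c = rec_nat (ms 0) (\<lambda>j u. f u (ms (Suc j)))"
  have c_0: "c 0 = ms 0" and c_Suc: "c (Suc j) = f (c j) (ms (Suc j))" for j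
    by (simp_all add: c_def)
  have c_ms: "(lift step)\<^sup>*\<^sup>* (c j) (ms j)" for j
  proof (induct j)
    case (Suc j)
    then have "(lift step)\<^sup>*\<^sup>* (c j) (ms (Suc j))"
      using assms by (rule rtranclp.rtrancl_into_rtrancl)
    then show ?case using f c_Suc by simp
  qed (simp add: c_0)
  have c_E: "(lift E_step)\<^sup>*\<^sup>* (c j) (c (Suc j)) \<and> obs_Nnf (c (Suc j)) = obs_Nnf (ms (Suc j))" for j
    using f[OF rtranclp.rtrancl_into_rtrancl[OF c_ms assms]] c_Suc by simp
  have "obs_Nnf (c j) = obs_Nnf (ms j)" for j
    using c_0 c_E by (cases j) auto
  then show ?thesis using that c_0 c_E c_ms by blast
qed

lemma lift_step_seq_cofinal_E_seq:
  assumes "is_mdist (ms 0)" and ms_step: "\<And>n. lift step (ms n) (ms (Suc n))"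
  obtains T where "T 0 = ms 0" and "\<And>i. lift E_step (T i) (T (Suc i))"
    and "\<And>i N. \<exists>j. obs_Nnf (T i) N \<le> obs_Nnf (ms j) N"
    and "\<And>j N. \<exists>i. obs_Nnf (ms j) N \<le> obs_Nnf (T i) N"
proof -
  obtain c where c_0: "c 0 = ms 0" and c_E: "\<And>j. (lift E_step)\<^sup>*\<^sup>* (c j) (c (Suc j))"
    and c_ms: "\<And>j. (lift step)\<^sup>*\<^sup>* (c j) (ms j)" and c_obs: "\<And>j. obs_Nnf (c j) = obs_Nnf (ms j)"
    using lift_step_seq_E_tracking[of ms] ms_step by metis
  obtain T where T_0: "T 0 = ms 0" and T_step: "\<And>i. lift E_step (T i) (T (Suc i))"
    and T_hits: "\<And>j. \<exists>i. T i = c j" and T_reaches: "\<And>i. \<exists>j. (lift E_step)\<^sup>*\<^sup>* (T i) (c j)"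
    using reflp_rtranclp_chain_imp_seq[of "lift E_step" c] lift_refl c_E c_0 by metis
  have "\<exists>j. obs_Nnf (T i) N \<le> obs_Nnf (ms j) N" for i N
  proof -
    have "(lift E_step)\<^sup>*\<^sup>* (ms 0) (T i)"
      using T_0 T_step by (induct i) (auto intro: rtranclp.rtrancl_into_rtrancl)
    then have ms_T: "(lift step)\<^sup>*\<^sup>* (ms 0) (T i)"
      using lift_rtranclp_mono E_step_imp_step by blast
    obtain j where "(lift E_step)\<^sup>*\<^sup>* (T i) (c j)" using T_reaches by blast
    then have "(lift step)\<^sup>*\<^sup>* (T i) (c j)"
      using lift_rtranclp_mono E_step_imp_step by blast
    then have "(lift step)\<^sup>*\<^sup>* (T i) (ms j)" using c_ms by (rule rtranclp_trans)
    then show ?thesis using reachable_obs_Nnf_mono[OF assms(1) ms_T] by blast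
  qed
  moreover have "\<exists>i. obs_Nnf (ms j) N \<le> obs_Nnf (T i) N" for j N
    using T_hits c_obs by (metis order_refl)
  ultimately show ?thesis using that T_0 T_step by blast
qed

theorem mainTheorem8:
  assumes "is_mdist m"
    and "obs_rel (lift step) m r"
  shows "obs_rel (lift E_step) m r"
proof -
  \<comment> \<open>\<open>lift r\<close> is reflexive, so a maximal sequence never stops\<close>
  obtain ms where ms_0: "ms 0 = m" and ms_step: "\<And>n. lift step (ms n) (ms (Suc n))"
    and r: "r = (\<lambda>N. SUP n. obs_Nnf (ms n) N)"
    using assms(2) lift_refl unfolding obs_rel_def max_seq_def by metis
  obtain T where "T 0 = m" and "\<And>i. lift E_step (T i) (T (Suc i))"
    and "\<And>i N. \<exists>j. obs_Nnf (T i) N \<le> obs_Nnf (ms j) N"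
    and "\<And>j N. \<exists>i. obs_Nnf (ms j) N \<le> obs_Nnf (T i) N"
    using lift_step_seq_cofinal_E_seq[of ms] assms(1) ms_0 ms_step by metis
  then have "max_seq (lift E_step) m T" and "r = (\<lambda>N. SUP i. obs_Nnf (T i) N)"
    unfolding max_seq_def r by (blast, intro ext SUP_real_eq_if_cofinal)
  then show ?thesis unfolding obs_rel_def by blast
qed

end
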